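(* Let $\mathcal G$ be an ample groupoid and $S$ a semifield. If the Steinberg algebra $A_S(\mathcal G)$ is congruence-simple, then (1) $S$ is either a field or the Boolean semifield $\mathbb B$, and (2) $\mathcal G$ is both minimal and effective.
   Context: A semifield is a nontrivial commutative semiring (commutative monoid addition with $0$, commutative associative multiplication with $1$, distributivity, $0$ absorbing) in which every nonzero element has a multiplicative inverse. $\mathbb B=(\{0,1\},\text{or},\text{and})$. A congruence on a hemiring $R$ is an equivalence relation $\sim$ such that $r\sim s$ implies $t+r\sim t+s$, $tr\sim ts$, $rt\sim st$ for all $t$; $R$ is congruence-simple if its only congruences are $R\times R$ and the diagonal. An ample groupoid is a topological groupoid whose unit space $\mathcal G^{(0)}$ is locally compact Hausdorff and totally disconnected and whose source and range maps $s,r$ are local homeomorphisms ($\mathcal G$ need not be Hausdorff). A subset $D\subseteq\mathcal G^{(0)}$ is invariant if $s(\gamma)\in D$ implies $r(\gamma)\in D$ for all $\gamma$. $\mathcal G$ is minimal if $\mathcal G^{(0)}$ has no open invariant subsets other than $\varnothing$ and $\mathcal G^{(0)}$. $\mathcal G$ is effective if the interior of the isotropy subgroupoid $\operatorname{Iso}(\mathcal G)=\{\gamma: s(\gamma)=r(\gamma)\}$ equals $\mathcal G^{(0)}$. The Steinberg algebra $A_S(\mathcal G)$ is the set of functions $\mathcal G\to S$ of the form $\sum_{U\in F}s_U1_U$ with $F$ a finite set of compact open bisections (subsets on which $s,r$ are homeomorphisms onto their images), with pointwise addition and convolution $(f*g)(\gamma)=\sum_{\alpha\beta=\gamma}f(\alpha)g(\beta)$.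 *)

theory Defs
  imports "HOL-Analysis.Analysis"
begin

definition semifield_ax :: "'s::comm_semiring_1 itself \<Rightarrow> bool" where
  "semifield_ax _ \<longleftrightarrow> (\<forall>x::'s. x \<noteq> 0 \<longrightarrow> (\<exists>y. x * y = 1))"

definition is_field_sf :: "'s::comm_semiring_1 itself \<Rightarrow> bool" where
  "is_field_sf _ \<longleftrightarrow> semifield_ax TYPE('s) \<and> (\<forall>x::'s. \<exists>y. x + y = 0)"

definition is_boolean_sf :: "'s::comm_semiring_1 itself \<Rightarrow> bool" where
  "is_boolean_sf _ \<longleftrightarrow> (\<exists>f :: 's \<Rightarrow> bool. bij f \<and> f 0 = False \<and> f 1 = True \<and>
      (\<forall>x y. f (x + y) = (f x \<or> f y) \<and> f (x * y) = (f x \<and> f y)))"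

text \<open>A groupoid with arrow set topspace T, source s, range r, partial multiplication m
(m a b defined when s a = r b) and inverse i. Units are elements of G.\<close>

definition composable_pairs :: "'g topology \<Rightarrow> ('g \<Rightarrow> 'g) \<Rightarrow> ('g \<Rightarrow> 'g) \<Rightarrow> ('g \<times> 'g) set" where
  "composable_pairs T s r = {(a, b). a \<in> topspace T \<and> b \<in> topspace T \<and> s a = r b}"

definition unit_space :: "'g topology \<Rightarrow> ('g \<Rightarrow> 'g) \<Rightarrow> 'g set" where
  "unit_space T s = s ` topspace T"

definition groupoid :: "'g set \<Rightarrow> ('g \<Rightarrow> 'g) \<Rightarrow> ('g \<Rightarrow> 'g) \<Rightarrow> ('g \<Rightarrow> 'g \<Rightarrow> 'g) \<Rightarrow> ('g \<Rightarrow> 'g) \<Rightarrow> bool" where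
  "groupoid G s r m i \<longleftrightarrow>
     (\<forall>g\<in>G. s g \<in> G \<and> r g \<in> G \<and> i g \<in> G
        \<and> s (s g) = s g \<and> r (s g) = s g \<and> s (r g) = r g \<and> r (r g) = r g
        \<and> m (r g) g = g \<and> m g (s g) = g
        \<and> s (i g) = r g \<and> r (i g) = s g \<and> m g (i g) = r g \<and> m (i g) g = s g)
   \<and> (\<forall>a\<in>G. \<forall>b\<in>G. s a = r b \<longrightarrow> m a b \<in> G \<and> s (m a b) = s b \<and> r (m a b) = r a)
   \<and> (\<forall>a\<in>G. \<forall>b\<in>G. \<forall>c\<in>G. s a = r b \<longrightarrow> s b = r c \<longrightarrow> m (m a b) c = m a (m b c))"

definition local_homeo :: "'a topology \<Rightarrow> 'b topology \<Rightarrow> ('a \<Rightarrow> 'b) \<Rightarrow> bool" where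
  "local_homeo X Y f \<longleftrightarrow> f ` topspace X \<subseteq> topspace Y \<and>
     (\<forall>x\<in>topspace X. \<exists>U. openin X U \<and> x \<in> U \<and> openin Y (f ` U) \<and>
        homeomorphic_map (subtopology X U) (subtopology Y (f ` U)) f)"

definition totally_disconnected_space :: "'a topology \<Rightarrow> bool" where
  "totally_disconnected_space X \<longleftrightarrow> (\<forall>x\<in>topspace X. connected_component_of_set X x = {x})"

definition ample_groupoid ::
  "'g topology \<Rightarrow> ('g \<Rightarrow> 'g) \<Rightarrow> ('g \<Rightarrow> 'g) \<Rightarrow> ('g \<Rightarrow> 'g \<Rightarrow> 'g) \<Rightarrow> ('g \<Rightarrow> 'g) \<Rightarrow> bool" where
  "ample_groupoid T s r m i \<longleftrightarrow>
     groupoid (topspace T) s r m i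
   \<and> continuous_map (subtopology (prod_topology T T) (composable_pairs T s r)) T (\<lambda>(a, b). m a b)
   \<and> continuous_map T T i
   \<and> locally_compact_space (subtopology T (unit_space T s))
   \<and> Hausdorff_space (subtopology T (unit_space T s))
   \<and> totally_disconnected_space (subtopology T (unit_space T s))
   \<and> local_homeo T (subtopology T (unit_space T s)) s
   \<and> local_homeo T (subtopology T (unit_space T s)) r"

definition compact_open_bisection ::
  "'g topology \<Rightarrow> ('g \<Rightarrow> 'g) \<Rightarrow> ('g \<Rightarrow> 'g) \<Rightarrow> 'g set \<Rightarrow> bool" where
  "compact_open_bisection T s r U \<longleftrightarrow> openin T U \<and> compactin T U
     \<and> homeomorphic_map (subtopology T U) (subtopology T (s ` U)) s
     \<and> homeomorphic_map (subtopology T U) (subtopology T (r ` U)) r"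

definition invariant_set :: "'g topology \<Rightarrow> ('g \<Rightarrow> 'g) \<Rightarrow> ('g \<Rightarrow> 'g) \<Rightarrow> 'g set \<Rightarrow> bool" where
  "invariant_set T s r D \<longleftrightarrow> D \<subseteq> unit_space T s \<and>
     (\<forall>g\<in>topspace T. s g \<in> D \<longrightarrow> r g \<in> D)"

definition minimal_groupoid :: "'g topology \<Rightarrow> ('g \<Rightarrow> 'g) \<Rightarrow> ('g \<Rightarrow> 'g) \<Rightarrow> bool" where
  "minimal_groupoid T s r \<longleftrightarrow>
     (\<forall>D. openin (subtopology T (unit_space T s)) D \<and> invariant_set T s r D
          \<longrightarrow> D = {} \<or> D = unit_space T s)"

definition isotropy :: "'g topology \<Rightarrow> ('g \<Rightarrow> 'g) \<Rightarrow> ('g \<Rightarrow> 'g) \<Rightarrow> 'g set" where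
  "isotropy T s r = {g \<in> topspace T. s g = r g}"

definition effective_groupoid :: "'g topology \<Rightarrow> ('g \<Rightarrow> 'g) \<Rightarrow> ('g \<Rightarrow> 'g) \<Rightarrow> bool" where
  "effective_groupoid T s r \<longleftrightarrow> T interior_of (isotropy T s r) = unit_space T s"

definition steinberg_algebra ::
  "'g topology \<Rightarrow> ('g \<Rightarrow> 'g) \<Rightarrow> ('g \<Rightarrow> 'g) \<Rightarrow> 's::comm_semiring_1 itself \<Rightarrow> ('g \<Rightarrow> 's) set" where
  "steinberg_algebra T s r _ =
     {f. \<exists>F c. finite F \<and> (\<forall>U\<in>F. compact_open_bisection T s r U) \<and>
           f = (\<lambda>x. \<Sum>U\<in>F. c U * (if x \<in> U then 1 else 0))}"

text \<open>The sum is taken over the pairs with f a \<noteq> 0 and g b \<noteq> 0 (the other terms vanish);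
for elements of the Steinberg algebra this index set is finite.\<close>
definition convolution ::
  "'g topology \<Rightarrow> ('g \<Rightarrow> 'g) \<Rightarrow> ('g \<Rightarrow> 'g) \<Rightarrow> ('g \<Rightarrow> 'g \<Rightarrow> 'g) \<Rightarrow>
   ('g \<Rightarrow> 's::comm_semiring_1) \<Rightarrow> ('g \<Rightarrow> 's) \<Rightarrow> 'g \<Rightarrow> 's" where
  "convolution T s r m f g x =
     (\<Sum>(a, b) \<in> {(a, b) \<in> composable_pairs T s r. m a b = x \<and> f a \<noteq> 0 \<and> g b \<noteq> 0}. f a * g b)"

definition hemiring_congruence :: "'a set \<Rightarrow> ('a \<Rightarrow> 'a \<Rightarrow> 'a) \<Rightarrow> ('a \<Rightarrow> 'a \<Rightarrow> 'a) \<Rightarrow> ('a \<times> 'a) set \<Rightarrow> bool" where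
  "hemiring_congruence A add mul R \<longleftrightarrow> equiv A R \<and>
     (\<forall>(x, y)\<in>R. \<forall>t\<in>A. (add t x, add t y) \<in> R \<and> (mul t x, mul t y) \<in> R \<and> (mul x t, mul y t) \<in> R)"

definition congruence_simple :: "'a set \<Rightarrow> ('a \<Rightarrow> 'a \<Rightarrow> 'a) \<Rightarrow> ('a \<Rightarrow> 'a \<Rightarrow> 'a) \<Rightarrow> bool" where
  "congruence_simple A add mul \<longleftrightarrow>
     (\<forall>R. hemiring_congruence A add mul R \<longrightarrow> R = A \<times> A \<or> R = Id_on A)"

end

theory Submission
  imports Defs
begin

text \<open>Each conclusion comes from a congruence on the Steinberg algebra \<open>A\<close> that is the
  kernel of a map \<open>\<phi>\<close> compatible with addition and convolution; congruence-simplicity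
  forces such a map to be constant or injective on \<open>A\<close>.
  If \<open>S\<close> is not a field, it is zero-sum-free without zero divisors, so the zero set of a
  function is compatible; as it does not separate \<open>c \<cdot> 1\<^sub>W\<close> from \<open>1\<^sub>W\<close>, every
  \<open>c \<noteq> 0\<close> equals \<open>1\<close> and \<open>S\<close> is Boolean.
  For an open invariant set \<open>D\<close> of units, forgetting the values on arrows with source in
  \<open>D\<close> is compatible; it is non-constant unless \<open>D\<close> is everything and non-injective
  unless \<open>D\<close> is empty.
  Summing a function over the arrows between each pair of units is compatible as well;
  for a compact open bisection \<open>B\<close> of isotropy arrows it identifies \<open>1\<^sub>B\<close> with
  \<open>1\<^bsub>s(B)\<^esub>\<close>, so \<open>B\<close> consists of units, i.e. the groupoid is effective.\<close>

section \<open>Compact open neighbourhoods\<close>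

lemma local_homeo_imp_continuous_map:
  assumes "local_homeo A B f"
  shows "continuous_map A B f"
proof -
  have "openin A {x \<in> topspace A. f x \<in> V}" if V: "openin B V" for V
  proof (subst openin_subopen, intro ballI)
    fix x assume x: "x \<in> {x \<in> topspace A. f x \<in> V}"
    then obtain U where U: "openin A U" "x \<in> U"
      "homeomorphic_map (subtopology A U) (subtopology B (f ` U)) f"
      using assms unfolding local_homeo_def by blast
    have "continuous_map (subtopology A U) B f"
      using homeomorphic_imp_continuous_map[OF U(3)] continuous_map_into_fulltopology by blast
    then have "openin A {y \<in> topspace (subtopology A U). f y \<in> V}"
      using V U(1) openin_continuous_map_preimage openin_trans_full by blast
    then show "\<exists>W. openin A W \<and> x \<in> W \<and> W \<subseteq> {x \<in> topspace A. f x \<in> V}"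
      using x U(2) by (intro exI[of _ "{y \<in> topspace (subtopology A U). f y \<in> V}"]) auto
  qed
  then show ?thesis
    using assms unfolding local_homeo_def continuous_map_def by blast
qed

lemma local_homeo_imp_openin_image:
  assumes "local_homeo A B f" "openin A W"
  shows "openin B (f ` W)"
proof (subst openin_subopen, intro ballI)
  fix y assume "y \<in> f ` W"
  then obtain x where x: "x \<in> W" "y = f x" by blast
  then have "x \<in> topspace A" using assms(2) openin_subset by blast
  then obtain U where U: "openin A U" "x \<in> U" "openin B (f ` U)"
      "homeomorphic_map (subtopology A U) (subtopology B (f ` U)) f"
    using assms unfolding local_homeo_def by blast
  have "openin (subtopology A U) (W \<inter> U)"
    using assms(2) by (simp add: openin_subtopology_Int)
  then have "openin (subtopology B (f ` U)) (f ` (W \<inter> U))"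
    using homeomorphic_imp_open_map[OF U(4)] unfolding open_map_def by blast
  then have "openin B (f ` (W \<inter> U))" using U(3) openin_trans_full by blast
  then show "\<exists>V. openin B V \<and> y \<in> V \<and> V \<subseteq> f ` W" using x U(2) by blast
qed

lemma local_homeo_locally_injective:
  assumes "local_homeo A B f" "x \<in> topspace A"
  obtains U where "openin A U" "x \<in> U" "inj_on f U"
  using assms unfolding local_homeo_def
  by (metis homeomorphic_imp_injective_map openin_subset topspace_subtopology_subset)

lemma compact_Hausdorff_clopen_separation:
  assumes Y: "compact_space Y" "Hausdorff_space Y" and x: "x \<in> topspace Y"
    and C: "closedin Y C" "x \<notin> C"
    and trivial_component: "\<And>D. connectedin Y D \<Longrightarrow> x \<in> D \<Longrightarrow> D \<subseteq> {x}"
  obtains P where "openin Y P" "closedin Y P" "x \<in> P" "P \<inter> C = {}"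
proof -
  have point: "closedin Y {x}" using closedin_Hausdorff_singleton[OF Y(2) x] .
  have "disjnt D {x} \<or> disjnt D C" if "connectedin Y D" for D
    using trivial_component[OF that] C(2) by (cases "x \<in> D") (auto simp: disjnt_def)
  then have "separated_between Y {x} C"
    by (rule cut_wire_fence_theorem[OF Y point C(1)])
  then obtain P Q where PQ: "openin Y P" "openin Y Q" "P \<union> Q = topspace Y" "disjnt P Q"
      "x \<in> P" "C \<subseteq> Q"
    unfolding separated_between_def by blast
  then have "P = topspace Y - Q" by (auto simp: disjnt_def)
  then have "closedin Y P" using PQ(2) by (simp add: closedin_diff)
  then show ?thesis using that PQ by (auto simp: disjnt_def)
qed

text \<open>Inside a compact closed neighbourhood \<open>C \<subseteq> W\<close> of \<open>x\<close>, the point \<open>x\<close> is its own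
  component, so the cut-wire-fence theorem separates it from \<open>C - V\<close> by a clopen subset of
  \<open>C\<close>, for any open \<open>x \<in> V \<subseteq> C\<close>.\<close>

lemma compact_open_nbhd:
  assumes lc: "locally_compact_space X" and H: "Hausdorff_space X"
    and td: "totally_disconnected_space X" and W: "openin X W" "x \<in> W"
  obtains K where "openin X K" "compactin X K" "x \<in> K" "K \<subseteq> W"
proof -
  have "neighbourhood_base_of (\<lambda>C. compactin X C \<and> closedin X C) X"
    using lc H locally_compact_space_neighbourhood_base_closedin by blast
  then obtain V C where VC: "openin X V" "compactin X C" "closedin X C" "x \<in> V" "V \<subseteq> C"
      "C \<subseteq> W"
    using W unfolding neighbourhood_base_of by metis
  let ?Y = "subtopology X C"
  have CX: "C \<subseteq> topspace X" using VC closedin_subset by blast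
  have "closedin X (topspace X - V)" using VC(1) by blast
  then have "closedin ?Y (C \<inter> (topspace X - V))" by (simp add: closedin_subtopology_Int_closed)
  moreover have "C \<inter> (topspace X - V) = C - V" using CX by blast
  ultimately have closed: "closedin ?Y (C - V)" by simp
  have trivial_component: "D \<subseteq> {x}" if "connectedin ?Y D" "x \<in> D" for D
  proof -
    have "connectedin X D" using that(1) connectedin_subtopology by blast
    then have "D \<subseteq> connected_component_of_set X x"
      using that(2) connected_component_of_maximal by metis
    moreover have "x \<in> topspace X" using VC(4,5) CX by blast
    ultimately show ?thesis using td unfolding totally_disconnected_space_def by blast
  qed
  have "compact_space ?Y" using VC(2) compact_space_subtopology by blast
  moreover have "Hausdorff_space ?Y" using H Hausdorff_space_subtopology by blast
  moreover have "x \<in> topspace ?Y" using VC CX by auto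
  ultimately obtain P where P: "openin ?Y P" "closedin ?Y P" "x \<in> P" "P \<inter> (C - V) = {}"
    by (rule compact_Hausdorff_clopen_separation[OF _ _ _ closed _ trivial_component])
      (use VC(4) in auto)
  have PC: "P \<subseteq> C" using openin_subset[OF P(1)] by simp
  then have PV: "P \<subseteq> V" using P(4) by blast
  have "openin X P"
  proof -
    obtain Q where "openin X Q" "P = Q \<inter> C" using P(1) by (auto simp: openin_subtopology)
    then have "P = Q \<inter> V" using PV VC(5) by blast
    then show ?thesis using \<open>openin X Q\<close> VC(1) by blast
  qed
  moreover have "compactin X P"
    using closed_compactin[OF VC(2) PC closedin_trans_full[OF P(2) VC(3)]] .
  moreover have "P \<subseteq> W" using PV VC(5,6) by blast
  ultimately show ?thesis using that P(3) by blast
qed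

section \<open>Congruences and semifields\<close>

text \<open>The kernel of \<open>\<phi>\<close> is a congruence.\<close>

lemma congruence_simple_compatible_map:
  assumes simple: "congruence_simple A add mul"
    and closed: "\<And>f g. f \<in> A \<Longrightarrow> g \<in> A \<Longrightarrow> add f g \<in> A \<and> mul f g \<in> A"
    and compatible: "\<And>t f g. t \<in> A \<Longrightarrow> f \<in> A \<Longrightarrow> g \<in> A \<Longrightarrow> \<phi> f = \<phi> g \<Longrightarrow>
      \<phi> (add t f) = \<phi> (add t g) \<and> \<phi> (mul t f) = \<phi> (mul t g) \<and> \<phi> (mul f t) = \<phi> (mul g t)"
  shows "(\<forall>f\<in>A. \<forall>g\<in>A. \<phi> f = \<phi> g) \<or> inj_on \<phi> A"
proof -
  define R where "R = {(f, g). f \<in> A \<and> g \<in> A \<and> \<phi> f = \<phi> g}"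
  have "hemiring_congruence A add mul R"
    unfolding hemiring_congruence_def
  proof (intro conjI)
    show "equiv A R" unfolding R_def by (rule equivI) (auto simp: refl_on_def sym_def trans_def)
    show "\<forall>(f, g)\<in>R. \<forall>t\<in>A. (add t f, add t g) \<in> R \<and> (mul t f, mul t g) \<in> R \<and>
        (mul f t, mul g t) \<in> R"
    proof clarify
      fix f g t assume "(f, g) \<in> R" and t: "t \<in> A"
      then have f: "f \<in> A" and g: "g \<in> A" and "\<phi> f = \<phi> g" unfolding R_def by auto
      with compatible[OF t f g] closed[OF t f] closed[OF t g] closed[OF f t] closed[OF g t]
      show "(add t f, add t g) \<in> R \<and> (mul t f, mul t g) \<in> R \<and> (mul f t, mul g t) \<in> R"
        unfolding R_def by simp
    qed
  qed
  then have "R = A \<times> A \<or> R = Id_on A"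
    using simple unfolding congruence_simple_def by blast
  then show ?thesis
  proof
    assume R: "R = A \<times> A"
    have "\<phi> f = \<phi> g" if "f \<in> A" "g \<in> A" for f g
    proof -
      have "(f, g) \<in> R" unfolding R using that by simp
      then show ?thesis unfolding R_def by simp
    qed
    then show ?thesis by blast
  next
    assume R: "R = Id_on A"
    have "f = g" if "f \<in> A" "g \<in> A" "\<phi> f = \<phi> g" for f g
    proof -
      have "(f, g) \<in> R" unfolding R_def using that by simp
      then show ?thesis unfolding R by (rule Id_onE) simp
    qed
    then have "inj_on \<phi> A" unfolding inj_on_def by blast
    then show ?thesis ..
  qed
qed

text \<open>If \<open>a\<close> has no additive inverse and \<open>x + y = 0\<close> with \<open>x\<close> invertible, then
  \<open>a + y x\<inverse> a = (x + y) x\<inverse> a = 0\<close>.\<close>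

lemma semifield_zero_sum_free:
  assumes "semifield_ax TYPE('s::comm_semiring_1)" and "\<not> (\<forall>x::'s. \<exists>y. x + y = 0)"
  shows "x + y = (0::'s) \<longleftrightarrow> x = 0 \<and> y = 0"
proof -
  obtain a :: 's where a: "\<And>y. a + y \<noteq> 0" using assms(2) by blast
  have "x = 0" if "x + y = 0" for x y :: 's
  proof (rule ccontr)
    assume "x \<noteq> 0"
    then obtain x' where "x * x' = 1" using assms(1) unfolding semifield_ax_def by blast
    then have "(x + y) * (x' * a) = a + y * x' * a" by (simp add: algebra_simps)
    then show False using that a by simp
  qed
  then show ?thesis by (metis add.commute add.right_neutral)
qed

lemma semifield_no_zero_divisors:
  assumes "semifield_ax TYPE('s::comm_semiring_1)"
  shows "x * y = (0::'s) \<longleftrightarrow> x = 0 \<or> y = 0"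
proof
  assume xy: "x * y = 0"
  show "x = 0 \<or> y = 0"
  proof (cases "x = 0")
    case False
    then obtain x' where "x * x' = 1" using assms unfolding semifield_ax_def by blast
    then have "y = x' * (x * y)" by (metis mult.assoc mult.commute mult_1)
    then show ?thesis using xy by simp
  qed simp
qed auto

lemma is_boolean_sfI:
  assumes zero_sum_free: "\<And>x y::'s. x + y = 0 \<longleftrightarrow> x = 0 \<and> y = 0"
    and nonzero_eq_one: "\<And>c::'s. c \<noteq> 0 \<Longrightarrow> c = 1"
  shows "is_boolean_sf TYPE('s::comm_semiring_1)"
  unfolding is_boolean_sf_def
proof (intro exI[of _ "\<lambda>x::'s. x \<noteq> 0"] conjI allI)
  show "bij (\<lambda>x::'s. x \<noteq> 0)"
  proof (rule bijI)
    show "inj (\<lambda>x::'s. x \<noteq> 0)"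
    proof (rule injI)
      fix x y :: 's assume "(x \<noteq> 0) = (y \<noteq> 0)"
      then show "x = y" using nonzero_eq_one[of x] nonzero_eq_one[of y] by (cases "x = 0") auto
    qed
    show "surj (\<lambda>x::'s. x \<noteq> 0)"
    proof (rule surjI)
      fix b :: bool
      show "((if b then 1 else 0) :: 's) \<noteq> 0 \<longleftrightarrow> b" by simp
    qed
  qed
  fix x y :: 's
  show "(x + y \<noteq> 0) = (x \<noteq> 0 \<or> y \<noteq> 0)" using zero_sum_free by blast
  show "(x * y \<noteq> 0) = (x \<noteq> 0 \<and> y \<noteq> 0)"
    using nonzero_eq_one[of x] nonzero_eq_one[of y] by (cases "x = 0 \<or> y = 0") auto
qed simp_all

section \<open>Compact open bisections of an ample groupoid\<close>

definition bisection_prod ::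
  "('g \<Rightarrow> 'g) \<Rightarrow> ('g \<Rightarrow> 'g) \<Rightarrow> ('g \<Rightarrow> 'g \<Rightarrow> 'g) \<Rightarrow> 'g set \<Rightarrow> 'g set \<Rightarrow> 'g set" where
  "bisection_prod s r m U V = (\<lambda>(a, b). m a b) ` {(a, b). a \<in> U \<and> b \<in> V \<and> s a = r b}"

lemma bisection_prod_iff:
  "x \<in> bisection_prod s r m U V \<longleftrightarrow> (\<exists>a b. a \<in> U \<and> b \<in> V \<and> s a = r b \<and> x = m a b)"
  unfolding bisection_prod_def by auto

locale ample =
  fixes T :: "'g topology" and s r :: "'g \<Rightarrow> 'g" and m :: "'g \<Rightarrow> 'g \<Rightarrow> 'g" and i :: "'g \<Rightarrow> 'g"
  assumes ample_groupoid: "ample_groupoid T s r m i"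
begin

abbreviation "G \<equiv> topspace T"

abbreviation "U0 \<equiv> unit_space T s"

abbreviation "X \<equiv> subtopology T U0"

lemma arrowD:
  assumes "g \<in> G"
  shows "s g \<in> G" "r g \<in> G" "i g \<in> G" "s (s g) = s g" "r (s g) = s g" "s (r g) = r g"
    "r (r g) = r g" "m (r g) g = g" "m g (s g) = g" "s (i g) = r g" "r (i g) = s g"
    "m g (i g) = r g" "m (i g) g = s g"
  using ample_groupoid assms unfolding ample_groupoid_def groupoid_def by blast+

lemma compD:
  assumes "a \<in> G" "b \<in> G" "s a = r b"
  shows "m a b \<in> G" "s (m a b) = s b" "r (m a b) = r a"
  using ample_groupoid assms unfolding ample_groupoid_def groupoid_def by blast+

lemma comp_assoc:
  assumes "a \<in> G" "b \<in> G" "c \<in> G" "s a = r b" "s b = r c"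
  shows "m (m a b) c = m a (m b c)"
  using ample_groupoid assms unfolding ample_groupoid_def groupoid_def by blast

lemma unit_space_subset: "U0 \<subseteq> G"
  unfolding unit_space_def using arrowD by blast

lemma unitD:
  assumes "u \<in> U0"
  shows "u \<in> G" "s u = u" "r u = u"
  using assms arrowD unfolding unit_space_def by auto

lemma topspace_unit_space: "topspace X = U0"
  using unit_space_subset by auto

lemma continuous_map_comp:
  "continuous_map (subtopology (prod_topology T T) (composable_pairs T s r)) T (\<lambda>(a, b). m a b)"
  using ample_groupoid unfolding ample_groupoid_def by blast

lemma continuous_map_inverse: "continuous_map T T i"
  using ample_groupoid unfolding ample_groupoid_def by blast

lemma local_homeo_source: "local_homeo T X s"
  using ample_groupoid unfolding ample_groupoid_def by blast

lemma local_homeo_range: "local_homeo T X r"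
  using ample_groupoid unfolding ample_groupoid_def by blast

lemma continuous_map_source: "continuous_map T X s"
  using local_homeo_source local_homeo_imp_continuous_map by blast

lemma continuous_map_range: "continuous_map T X r"
  using local_homeo_range local_homeo_imp_continuous_map by blast

lemma continuous_map_source_full: "continuous_map T T s"
  using continuous_map_source continuous_map_into_fulltopology by blast

lemma continuous_map_range_full: "continuous_map T T r"
  using continuous_map_range continuous_map_into_fulltopology by blast

lemma Hausdorff_unit_space: "Hausdorff_space X"
  using ample_groupoid unfolding ample_groupoid_def by blast

lemma locally_compact_unit_space: "locally_compact_space X"
  using ample_groupoid unfolding ample_groupoid_def by blast

lemma totally_disconnected_unit_space: "totally_disconnected_space X"
  using ample_groupoid unfolding ample_groupoid_def by blast

lemma compact_open_unit_nbhd: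
  assumes "openin X W" "u \<in> W"
  obtains K where "openin X K" "compactin X K" "u \<in> K" "K \<subseteq> W"
  using compact_open_nbhd[OF locally_compact_unit_space Hausdorff_unit_space
      totally_disconnected_unit_space assms] .

text \<open>The source map is injective near a unit and fixes the units.\<close>

lemma openin_unit_space: "openin T U0"
proof (subst openin_subopen, intro ballI)
  fix u assume u: "u \<in> U0"
  obtain U where U: "openin T U" "u \<in> U" "inj_on s U"
    using local_homeo_locally_injective[OF local_homeo_source unitD(1)[OF u]] .
  let ?N = "{y \<in> G. s y \<in> U} \<inter> U"
  have "openin T ?N"
    using openin_continuous_map_preimage[OF continuous_map_source_full U(1)] U(1) by (rule openin_Int)
  moreover have "?N \<subseteq> U0"
  proof
    fix y assume y: "y \<in> ?N"
    then have "s (s y) = s y" using arrowD(4) by blast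
    then have "s y = y" using inj_onD[OF U(3)] y by blast
    then show "y \<in> U0" using y unfolding unit_space_def by (intro rev_image_eqI[of y]) auto
  qed
  ultimately show "\<exists>N. openin T N \<and> u \<in> N \<and> N \<subseteq> U0" using U(2) unitD[OF u] by auto
qed

lemma compact_open_bisectionI:
  assumes "openin T W" "compactin T W" "inj_on s W" "inj_on r W"
  shows "compact_open_bisection T s r W"
proof -
  have WG: "W \<subseteq> G" using assms openin_subset by blast
  have hom: "homeomorphic_map (subtopology T W) (subtopology T (f ` W)) f"
    if cf: "continuous_map T X f" and inj: "inj_on f W" for f
  proof (rule continuous_imp_homeomorphic_map)
    have fW: "f ` W \<subseteq> U0" using cf WG by (auto simp: continuous_map_def)
    show "continuous_map (subtopology T W) (subtopology T (f ` W)) f"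
      using cf by (intro continuous_map_into_subtopology continuous_map_from_subtopology)
        (auto simp: continuous_map_in_subtopology)
    show "compact_space (subtopology T W)" using assms compact_space_subtopology by blast
    have "subtopology T (f ` W) = subtopology X (f ` W)"
      using fW by (simp add: subtopology_subtopology inf_absorb2)
    then show "Hausdorff_space (subtopology T (f ` W))"
      using Hausdorff_unit_space Hausdorff_space_subtopology by metis
    show "f ` topspace (subtopology T W) = topspace (subtopology T (f ` W))"
      using WG fW unit_space_subset by auto
    show "inj_on f (topspace (subtopology T W))" using inj by (simp add: inj_on_subset)
  qed
  show ?thesis unfolding compact_open_bisection_def
    using assms hom[OF continuous_map_source] hom[OF continuous_map_range] by blast
qed

lemma compact_open_bisectionD:
  assumes "compact_open_bisection T s r W"
  shows "openin T W" "compactin T W" "inj_on s W" "inj_on r W" "W \<subseteq> G"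
proof -
  show "openin T W" "compactin T W"
    using assms unfolding compact_open_bisection_def by blast+
  then show WG: "W \<subseteq> G" using openin_subset by blast
  have "topspace (subtopology T W) = W" using WG by auto
  then show "inj_on s W" "inj_on r W"
    using assms homeomorphic_imp_injective_map unfolding compact_open_bisection_def by metis+
qed

text \<open>Shrink a neighbourhood of \<open>g\<close> on which \<open>s\<close> is a homeomorphism and \<open>r\<close> is
  injective to the \<open>s\<close>-preimage of a compact open set of units.\<close>

lemma compact_open_bisection_basis:
  assumes g: "g \<in> G" and O: "openin T N" "g \<in> N" and V: "openin X V" "s g \<in> V"
  obtains W where "compact_open_bisection T s r W" "g \<in> W" "W \<subseteq> N" "s ` W \<subseteq> V"
proof -
  obtain U1 where U1: "openin T U1" "g \<in> U1"
      "homeomorphic_map (subtopology T U1) (subtopology X (s ` U1)) s"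
    using local_homeo_source g unfolding local_homeo_def by blast
  obtain U2 where U2: "openin T U2" "g \<in> U2" "inj_on r U2"
    using local_homeo_locally_injective[OF local_homeo_range g] by blast
  let ?N = "U1 \<inter> U2 \<inter> N"
  have N: "openin T ?N" using U1 U2 O by blast
  have "openin X (s ` ?N \<inter> V)"
    using local_homeo_imp_openin_image[OF local_homeo_source N] V by blast
  moreover have "s g \<in> s ` ?N \<inter> V" using U1 U2 O V by blast
  ultimately obtain K where K: "openin X K" "compactin X K" "s g \<in> K" "K \<subseteq> s ` ?N \<inter> V"
    by (rule compact_open_unit_nbhd)
  let ?W = "{y \<in> ?N. s y \<in> K}"
  have "openin T {y \<in> G. s y \<in> K}"
    using openin_continuous_map_preimage[OF continuous_map_source K(1)] by simp
  moreover have "?W = ?N \<inter> {y \<in> G. s y \<in> K}" using N openin_subset by blast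
  ultimately have W_open: "openin T ?W" using N by auto
  have sW: "s ` ?W = K" using K(4) by auto
  have U1G: "?W \<subseteq> topspace (subtopology T U1)" using U1 openin_subset by auto
  have "compactin (subtopology X (s ` U1)) K" using K(2,4) by (auto simp: compactin_subtopology)
  then have "compactin (subtopology T U1) ?W"
    using homeomorphic_map_compactness[OF U1(3) U1G] sW by simp
  then have W_compact: "compactin T ?W" by (simp add: compactin_subtopology)
  have "inj_on s ?W"
    using inj_on_subset[OF homeomorphic_imp_injective_map[OF U1(3)] U1G] .
  moreover have "inj_on r ?W" using U2(3) by (rule inj_on_subset) auto
  ultimately show ?thesis
    using that[OF compact_open_bisectionI[OF W_open W_compact]] g U1 U2 O K sW by auto
qed

lemma compact_open_bisection_exists:
  assumes "g \<in> G"
  obtains W where "compact_open_bisection T s r W" "g \<in> W"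
proof -
  have "s g \<in> U0" using assms unfolding unit_space_def by blast
  then have "s g \<in> topspace X" by (simp only: topspace_unit_space)
  then show ?thesis
    by (rule compact_open_bisection_basis[OF assms openin_topspace assms openin_topspace])
      (rule that)
qed

lemma compact_open_bisection_source_image:
  assumes B: "compact_open_bisection T s r B"
  shows "compact_open_bisection T s r (s ` B)"
proof (rule compact_open_bisectionI)
  note Bd = compact_open_bisectionD[OF B]
  have sB: "s ` B \<subseteq> U0" using Bd(5) unfolding unit_space_def by blast
  show "openin T (s ` B)"
    using local_homeo_imp_openin_image[OF local_homeo_source Bd(1)] openin_unit_space
    by (rule openin_trans_full)
  show "compactin T (s ` B)" using image_compactin[OF Bd(2) continuous_map_source_full] .
  show "inj_on s (s ` B)" "inj_on r (s ` B)"
    using sB unitD(2,3) by (metis inj_on_def subsetD)+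
qed

lemma compactin_bisection_prod:
  assumes U: "compact_open_bisection T s r U" and V: "compact_open_bisection T s r V"
  shows "compactin T (bisection_prod s r m U V)"
proof -
  note Ud = compact_open_bisectionD[OF U] and Vd = compact_open_bisectionD[OF V]
  let ?P = "{(a, b). a \<in> U \<and> b \<in> V \<and> s a = r b}"
  let ?Y = "subtopology (prod_topology T T) (U \<times> V)"
  have closed: "closedin ?Y {p \<in> topspace ?Y. (s \<circ> fst) p = (r \<circ> snd) p}"
  proof (rule closedin_continuous_maps_eq[OF Hausdorff_unit_space])
    show "continuous_map ?Y X (s \<circ> fst)"
      by (intro continuous_map_compose[OF _ continuous_map_source] continuous_map_from_subtopology
          continuous_map_fst)
    show "continuous_map ?Y X (r \<circ> snd)"
      by (intro continuous_map_compose[OF _ continuous_map_range] continuous_map_from_subtopology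
          continuous_map_snd)
  qed
  have "{p \<in> topspace ?Y. (s \<circ> fst) p = (r \<circ> snd) p} = ?P"
    using Ud(5) Vd(5) by auto
  moreover have "compact_space ?Y"
    using Ud(2) Vd(2) by (intro compact_space_subtopology) (simp add: compactin_Times)
  ultimately have "compactin ?Y ?P" using closedin_compact_space closed by simp
  moreover have "?P \<subseteq> composable_pairs T s r"
    unfolding composable_pairs_def using Ud(5) Vd(5) by auto
  ultimately have "compactin (subtopology (prod_topology T T) (composable_pairs T s r)) ?P"
    by (simp add: compactin_subtopology)
  then show ?thesis
    unfolding bisection_prod_def by (rule image_compactin[OF _ continuous_map_comp])
qed

lemma bisection_prod_eq_preimage:
  assumes "U \<subseteq> G" "V \<subseteq> G"
    and \<sigma>_r: "\<And>a. a \<in> U \<Longrightarrow> \<sigma> (r a) = a" and \<sigma>_in: "\<And>y. y \<in> r ` U \<Longrightarrow> \<sigma> y \<in> U"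
  shows "bisection_prod s r m U V = {y \<in> G. r y \<in> r ` U \<and> m (i (\<sigma> (r y))) y \<in> V}"
proof (intro set_eqI iffI)
  fix x assume "x \<in> bisection_prod s r m U V"
  then obtain a b where ab: "a \<in> U" "b \<in> V" "s a = r b" "x = m a b"
    unfolding bisection_prod_iff by blast
  have G: "a \<in> G" "b \<in> G" using ab assms(1,2) by auto
  have "r x = r a" "x \<in> G" using compD[OF G ab(3)] ab(4) by auto
  moreover have "m (i (\<sigma> (r x))) x = m (i a) (m a b)" using \<open>r x = r a\<close> \<sigma>_r ab by simp
  moreover have "\<dots> = b"
    using comp_assoc[OF arrowD(3)[OF G(1)] G] arrowD[OF G(1)] arrowD[OF G(2)] ab(3) by simp
  ultimately show "x \<in> {y \<in> G. r y \<in> r ` U \<and> m (i (\<sigma> (r y))) y \<in> V}" using ab by auto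
next
  fix y assume "y \<in> {y \<in> G. r y \<in> r ` U \<and> m (i (\<sigma> (r y))) y \<in> V}"
  then have y: "y \<in> G" "r y \<in> r ` U" "m (i (\<sigma> (r y))) y \<in> V" by auto
  define a where "a = \<sigma> (r y)"
  have a: "a \<in> U" "a \<in> G" "r a = r y" using y \<sigma>_in \<sigma>_r assms(1) unfolding a_def by auto
  have ia: "i a \<in> G" "s (i a) = r y" using arrowD(3,10)[OF a(2)] a(3) by auto
  have "s a = r (m (i a) y)" using compD(3)[OF ia(1) y(1) ia(2)] arrowD(11)[OF a(2)] by simp
  moreover have "m a (m (i a) y) = y"
    using comp_assoc[OF a(2) ia(1) y(1)] arrowD[OF a(2)] arrowD[OF y(1)] ia(2) a(3) by simp
  ultimately show "y \<in> bisection_prod s r m U V"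
    unfolding bisection_prod_iff using a(1) y(3) a_def by metis
qed

lemma openin_bisection_prod:
  assumes U: "compact_open_bisection T s r U" and V: "compact_open_bisection T s r V"
  shows "openin T (bisection_prod s r m U V)"
proof -
  note Ud = compact_open_bisectionD[OF U] and Vd = compact_open_bisectionD[OF V]
  obtain \<sigma> where \<sigma>: "homeomorphic_maps (subtopology T U) (subtopology T (r ` U)) r \<sigma>"
    using U unfolding compact_open_bisection_def homeomorphic_map_maps by blast
  have \<sigma>_cont: "continuous_map (subtopology T (r ` U)) (subtopology T U) \<sigma>"
    and \<sigma>_r: "\<And>a. a \<in> U \<Longrightarrow> \<sigma> (r a) = a"
    using \<sigma> Ud(5) unfolding homeomorphic_maps_def by auto
  have \<sigma>_in: "\<And>y. y \<in> r ` U \<Longrightarrow> \<sigma> y \<in> U"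
    using \<sigma>_cont Ud(5) arrowD(2) unfolding continuous_map_def by fastforce
  let ?N = "{y \<in> G. r y \<in> r ` U}"
  have N: "openin T ?N"
    using openin_continuous_map_preimage[OF continuous_map_range
        local_homeo_imp_openin_image[OF local_homeo_range Ud(1)]] .
  let ?\<phi> = "\<lambda>y. m (i (\<sigma> (r y))) y"
  have r_cont: "continuous_map (subtopology T ?N) (subtopology T (r ` U)) r"
    by (intro continuous_map_into_subtopology continuous_map_from_subtopology
        continuous_map_range_full) auto
  have "continuous_map (subtopology T ?N) T (\<lambda>y. i (\<sigma> (r y)))"
    using continuous_map_compose[OF continuous_map_into_fulltopology[OF
          continuous_map_compose[OF r_cont \<sigma>_cont]] continuous_map_inverse]
    by (simp add: o_def continuous_map_in_subtopology)
  moreover have "continuous_map (subtopology T ?N) T (\<lambda>y. y)"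
    using continuous_map_id_subt[of T ?N] unfolding id_def .
  ultimately have "continuous_map (subtopology T ?N) (prod_topology T T) (\<lambda>y. (i (\<sigma> (r y)), y))"
    by (rule continuous_map_pairedI)
  moreover have "(\<lambda>y. (i (\<sigma> (r y)), y)) \<in> topspace (subtopology T ?N) \<rightarrow> composable_pairs T s r"
  proof
    fix y assume y: "y \<in> topspace (subtopology T ?N)"
    then have "\<sigma> (r y) \<in> U" "r (\<sigma> (r y)) = r y" using \<sigma>_in \<sigma>_r by auto
    moreover from this have "\<sigma> (r y) \<in> G" using Ud(5) by blast
    ultimately show "(i (\<sigma> (r y)), y) \<in> composable_pairs T s r"
      unfolding composable_pairs_def using y arrowD(3,10) by auto
  qed
  ultimately have pair_cont: "continuous_map (subtopology T ?N)
      (subtopology (prod_topology T T) (composable_pairs T s r)) (\<lambda>y. (i (\<sigma> (r y)), y))"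
    by (rule continuous_map_into_subtopology)
  have "continuous_map (subtopology T ?N) T ?\<phi>"
    using continuous_map_compose[OF pair_cont continuous_map_comp] by (simp add: o_def)
  then have "openin (subtopology T ?N) {y \<in> topspace (subtopology T ?N). ?\<phi> y \<in> V}"
    using Vd(1) by (rule openin_continuous_map_preimage)
  then have "openin T {y \<in> topspace (subtopology T ?N). ?\<phi> y \<in> V}"
    using N by (rule openin_trans_full)
  moreover have "{y \<in> topspace (subtopology T ?N). ?\<phi> y \<in> V} = bisection_prod s r m U V"
    using bisection_prod_eq_preimage[OF Ud(5) Vd(5) \<sigma>_r \<sigma>_in] by auto
  ultimately show ?thesis by simp
qed

lemma bisection_prod_factors_eq:
  assumes U: "compact_open_bisection T s r U" and V: "compact_open_bisection T s r V"
    and ab: "a \<in> U" "b \<in> V" "s a = r b" and ab': "a' \<in> U" "b' \<in> V" "s a' = r b'"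
    and eq: "s (m a b) = s (m a' b') \<or> r (m a b) = r (m a' b')"
  shows "a = a' \<and> b = b'"
proof -
  note Ud = compact_open_bisectionD[OF U] and Vd = compact_open_bisectionD[OF V]
  have G: "a \<in> G" "b \<in> G" "a' \<in> G" "b' \<in> G" using ab ab' Ud(5) Vd(5) by auto
  have "s b = s b' \<or> r a = r a'"
    using eq compD[OF G(1,2) ab(3)] compD[OF G(3,4) ab'(3)] by simp
  then show ?thesis
  proof
    assume "s b = s b'"
    then have "b = b'" using inj_onD[OF Vd(3)] ab(2) ab'(2) by blast
    then have "s a = s a'" using ab(3) ab'(3) by simp
    then show ?thesis using inj_onD[OF Ud(3)] ab(1) ab'(1) \<open>b = b'\<close> by blast
  next
    assume "r a = r a'"
    then have "a = a'" using inj_onD[OF Ud(4)] ab(1) ab'(1) by blast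
    then have "r b = r b'" using ab(3) ab'(3) by simp
    then show ?thesis using inj_onD[OF Vd(4)] ab(2) ab'(2) \<open>a = a'\<close> by blast
  qed
qed

lemma inj_on_bisection_prod:
  assumes "compact_open_bisection T s r U" "compact_open_bisection T s r V"
  shows "inj_on s (bisection_prod s r m U V)" "inj_on r (bisection_prod s r m U V)"
  using bisection_prod_factors_eq[OF assms]
  by (intro inj_onI; unfold bisection_prod_iff; elim exE conjE; fast)+

lemma compact_open_bisection_prod:
  assumes "compact_open_bisection T s r U" "compact_open_bisection T s r V"
  shows "compact_open_bisection T s r (bisection_prod s r m U V)"
  by (intro compact_open_bisectionI openin_bisection_prod compactin_bisection_prod
      inj_on_bisection_prod assms)

lemma invariant_set_source_iff_range:
  assumes "invariant_set T s r D" "g \<in> G"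
  shows "s g \<in> D \<longleftrightarrow> r g \<in> D"
  using assms arrowD(3,10,11)[OF assms(2)] unfolding invariant_set_def by metis

end

section \<open>The Steinberg algebra\<close>

lemma steinberg_algebra_iff:
  "f \<in> steinberg_algebra T s r TYPE('s::comm_semiring_1) \<longleftrightarrow>
   (\<exists>F c. finite F \<and> (\<forall>U\<in>F. compact_open_bisection T s r U) \<and>
      f = (\<lambda>x. \<Sum>U\<in>F. (c U :: 's) * indicator U x))"
  unfolding steinberg_algebra_def indicator_def of_bool_def mem_Collect_eq by (rule refl)

lemma steinberg_algebra_sumI:
  assumes "finite J" "\<And>j. j \<in> J \<Longrightarrow> compact_open_bisection T s r (W j)"
  shows "(\<lambda>x. \<Sum>j\<in>J. (k j :: 's::comm_semiring_1) * indicator (W j) x)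
           \<in> steinberg_algebra T s r TYPE('s)"
proof -
  define c where "c U = (\<Sum>j\<in>{j \<in> J. W j = U}. k j)" for U
  have "(\<Sum>j\<in>J. k j * indicator (W j) x) = (\<Sum>U\<in>W ` J. c U * indicator U x)" for x
  proof -
    have "(\<Sum>j\<in>J. k j * indicator (W j) x)
        = (\<Sum>U\<in>W ` J. \<Sum>j\<in>{j \<in> J. W j = U}. k j * indicator (W j) x)"
      by (rule sum.image_gen[OF assms(1)])
    also have "\<dots> = (\<Sum>U\<in>W ` J. \<Sum>j\<in>{j \<in> J. W j = U}. k j * indicator U x)"
      by (intro sum.cong) auto
    also have "\<dots> = (\<Sum>U\<in>W ` J. c U * indicator U x)"
      unfolding c_def by (simp add: sum_distrib_right)
    finally show ?thesis .
  qed
  then show ?thesis unfolding steinberg_algebra_iff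
    using assms by (intro exI[of _ "W ` J"] exI[of _ c]) auto
qed

lemma indicator_in_steinberg_algebra:
  assumes "compact_open_bisection T s r W"
  shows "(\<lambda>x. c * indicator W x) \<in> steinberg_algebra T s r TYPE('s::comm_semiring_1)"
proof -
  have "(\<lambda>x. c * indicator W x) = (\<lambda>x. \<Sum>U\<in>{W}. c * indicator U x)"
    by (subst sum.insert) simp_all
  then show ?thesis
    unfolding steinberg_algebra_iff using assms by (intro exI[of _ "{W}"] exI[of _ "\<lambda>_. c"]) simp
qed

lemma steinberg_algebra_add:
  assumes "f \<in> steinberg_algebra T s r TYPE('s::comm_semiring_1)"
    and "g \<in> steinberg_algebra T s r TYPE('s)"
  shows "(\<lambda>x. f x + g x) \<in> steinberg_algebra T s r TYPE('s)"
proof -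
  obtain F c where F: "finite F" "\<forall>U\<in>F. compact_open_bisection T s r U"
      "f = (\<lambda>x. \<Sum>U\<in>F. (c U :: 's) * indicator U x)"
    using assms(1) unfolding steinberg_algebra_iff by blast
  obtain F' c' where F': "finite F'" "\<forall>U\<in>F'. compact_open_bisection T s r U"
      "g = (\<lambda>x. \<Sum>U\<in>F'. (c' U :: 's) * indicator U x)"
    using assms(2) unfolding steinberg_algebra_iff by blast
  have "(\<lambda>x. \<Sum>j\<in>F <+> F'. case_sum c c' j * indicator (case_sum id id j) x)
      \<in> steinberg_algebra T s r TYPE('s)"
    using F F' by (intro steinberg_algebra_sumI) auto
  moreover have "(\<lambda>x. \<Sum>j\<in>F <+> F'. case_sum c c' j * indicator (case_sum id id j) x)
      = (\<lambda>x. f x + g x)"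
    using F F' by (simp only: sum.Plus o_def sum.case id_apply)
  ultimately show ?thesis by simp
qed

lemma sum_indicator_nonzero_imp_mem_Union:
  assumes "(\<Sum>U\<in>F. (c U :: 's::comm_semiring_1) * indicator U x) \<noteq> 0"
  shows "x \<in> \<Union>F"
proof (rule ccontr)
  assume "x \<notin> \<Union>F"
  then have "(\<Sum>U\<in>F. c U * indicator U x) = 0" by (intro sum.neutral) simp
  with assms show False by contradiction
qed

lemma finite_fiber_Union:
  assumes "finite F" "\<And>U. U \<in> F \<Longrightarrow> inj_on h U"
  shows "finite {a \<in> \<Union>F. h a = u}"
proof -
  have "{a \<in> \<Union>F. h a = u} \<subseteq> (\<Union>U\<in>F. h -` {u} \<inter> U)" by blast
  moreover have "finite (\<Union>U\<in>F. h -` {u} \<inter> U)"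
    using assms by (intro finite_UN_I finite_vimage_IntI) auto
  ultimately show ?thesis by (rule finite_subset)
qed

lemma sum_nonzero_if_zero_sum_free:
  fixes h :: "'a \<Rightarrow> 's::comm_monoid_add"
  assumes zero_sum_free: "\<And>x y::'s. x + y = 0 \<longleftrightarrow> x = 0 \<and> y = 0"
    and "finite A" "A \<noteq> {}" "\<And>a. a \<in> A \<Longrightarrow> h a \<noteq> 0"
  shows "sum h A \<noteq> 0"
  using assms(2-4) by (induction A rule: finite_ne_induct) (simp_all add: zero_sum_free)

lemma convolution_eq_zero_iff:
  fixes T :: "'g topology" and s r :: "'g \<Rightarrow> 'g" and m :: "'g \<Rightarrow> 'g \<Rightarrow> 'g" and x :: 'g
    and t f :: "'g \<Rightarrow> 's::comm_semiring_1"
  assumes zero_sum_free: "\<And>x y::'s. x + y = 0 \<longleftrightarrow> x = 0 \<and> y = 0"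
    and no_zero_divisors: "\<And>x y::'s. x * y = 0 \<longleftrightarrow> x = 0 \<or> y = 0"
  defines "P \<equiv> {(a, b) \<in> composable_pairs T s r. m a b = x \<and> t a \<noteq> 0 \<and> f b \<noteq> 0}"
  shows "convolution T s r m t f x = 0 \<longleftrightarrow> infinite P \<or> P = {}"
proof (cases "finite P \<and> P \<noteq> {}")
  case True
  then have "(\<Sum>(a, b)\<in>P. t a * f b) \<noteq> 0"
    by (intro sum_nonzero_if_zero_sum_free zero_sum_free) (auto simp: P_def no_zero_divisors)
  then show ?thesis using True unfolding convolution_def P_def by simp
next
  case False
  then have "(\<Sum>(a, b)\<in>P. t a * f b) = 0" by (cases "finite P") auto
  then show ?thesis using False unfolding convolution_def P_def by simp
qed

lemma convolution_zero_cong: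
  fixes t f t' f' :: "'g \<Rightarrow> 's::comm_semiring_1"
  assumes "\<And>x y::'s. x + y = 0 \<longleftrightarrow> x = 0 \<and> y = 0" "\<And>x y::'s. x * y = 0 \<longleftrightarrow> x = 0 \<or> y = 0"
    and "\<And>a. t a = 0 \<longleftrightarrow> t' a = 0" "\<And>b. f b = 0 \<longleftrightarrow> f' b = 0"
  shows "convolution T s r m t f x = 0 \<longleftrightarrow> convolution T s r m t' f' x = 0"
proof -
  have "{(a, b) \<in> composable_pairs T s r. m a b = x \<and> t a \<noteq> 0 \<and> f b \<noteq> 0}
      = {(a, b) \<in> composable_pairs T s r. m a b = x \<and> t' a \<noteq> 0 \<and> f' b \<noteq> 0}"
    using assms(3,4) by blast
  then show ?thesis by (simp only: convolution_eq_zero_iff[OF assms(1,2)])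
qed

lemma convolution_cong_right:
  assumes "\<And>a b. (a, b) \<in> composable_pairs T s r \<Longrightarrow> m a b = x \<Longrightarrow> f b = g b"
  shows "convolution T s r m t f x = convolution T s r m t g x"
proof -
  have "{(a, b) \<in> composable_pairs T s r. m a b = x \<and> t a \<noteq> 0 \<and> f b \<noteq> 0}
      = {(a, b) \<in> composable_pairs T s r. m a b = x \<and> t a \<noteq> 0 \<and> g b \<noteq> 0}"
    using assms by auto
  then show ?thesis unfolding convolution_def
    by (intro sum.cong) (use assms in auto)
qed

lemma convolution_cong_left:
  assumes "\<And>a b. (a, b) \<in> composable_pairs T s r \<Longrightarrow> m a b = x \<Longrightarrow> f a = g a"
  shows "convolution T s r m f t x = convolution T s r m g t x"
proof -
  have "{(a, b) \<in> composable_pairs T s r. m a b = x \<and> f a \<noteq> 0 \<and> t b \<noteq> 0}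
      = {(a, b) \<in> composable_pairs T s r. m a b = x \<and> g a \<noteq> 0 \<and> t b \<noteq> 0}"
    using assms by auto
  then show ?thesis unfolding convolution_def
    by (intro sum.cong) (use assms in auto)
qed

text \<open>\<open>arrow_sum s r G f u v\<close> sums \<open>f\<close> over the arrows from \<open>v\<close> to \<open>u\<close>: it pushes \<open>f\<close>
  forward to the orbit equivalence relation, turning convolution into matrix multiplication.\<close>

definition arrow_sum ::
  "('g \<Rightarrow> 'g) \<Rightarrow> ('g \<Rightarrow> 'g) \<Rightarrow> 'g set \<Rightarrow> ('g \<Rightarrow> 's::comm_semiring_1) \<Rightarrow> 'g \<Rightarrow> 'g \<Rightarrow> 's" where
  "arrow_sum s r G f u v = (\<Sum>x\<in>{x \<in> G. r x = u \<and> s x = v \<and> f x \<noteq> 0}. f x)"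

lemma arrow_sum_eq_sum:
  assumes "finite S" "{x \<in> G. r x = u \<and> s x = v \<and> f x \<noteq> 0} \<subseteq> S"
    "S \<subseteq> {x \<in> G. r x = u \<and> s x = v}"
  shows "arrow_sum s r G f u v = sum f S"
  unfolding arrow_sum_def by (rule sum.mono_neutral_left[OF assms(1,2)]) (use assms(3) in auto)

context ample
begin

lemma steinberg_algebra_fibers_finite:
  assumes "f \<in> steinberg_algebra T s r TYPE('s::comm_semiring_1)"
  shows "finite {a \<in> G. r a = u \<and> f a \<noteq> 0}" "finite {a \<in> G. s a = u \<and> f a \<noteq> 0}"
proof -
  obtain F c where F: "finite F" "\<forall>U\<in>F. compact_open_bisection T s r U"
      "f = (\<lambda>x. \<Sum>U\<in>F. (c U :: 's) * indicator U x)"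
    using assms unfolding steinberg_algebra_iff by blast
  have supp: "a \<in> \<Union>F" if "f a \<noteq> 0" for a
    using that unfolding F(3) by (rule sum_indicator_nonzero_imp_mem_Union)
  have "finite {a \<in> \<Union>F. r a = u}"
    using F(1,2) compact_open_bisectionD(4) by (intro finite_fiber_Union) auto
  moreover have "finite {a \<in> \<Union>F. s a = u}"
    using F(1,2) compact_open_bisectionD(3) by (intro finite_fiber_Union) auto
  moreover have "{a \<in> G. r a = u \<and> f a \<noteq> 0} \<subseteq> {a \<in> \<Union>F. r a = u}"
    "{a \<in> G. s a = u \<and> f a \<noteq> 0} \<subseteq> {a \<in> \<Union>F. s a = u}"
    using supp by auto
  ultimately show "finite {a \<in> G. r a = u \<and> f a \<noteq> 0}" "finite {a \<in> G. s a = u \<and> f a \<noteq> 0}"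
    by (auto intro: finite_subset)
qed

text \<open>An arrow factors through bisections \<open>U\<close>, \<open>V\<close> in at most one way.\<close>

lemma count_factorisations_bisection_prod:
  assumes U: "compact_open_bisection T s r U" and V: "compact_open_bisection T s r V"
    and "finite Q" "Q \<subseteq> {(a, b) \<in> composable_pairs T s r. m a b = x}"
    and "{(a, b) \<in> composable_pairs T s r. m a b = x \<and> a \<in> U \<and> b \<in> V} \<subseteq> Q"
  shows "(\<Sum>q\<in>Q. indicator U (fst q) * indicator V (snd q) :: 's::comm_semiring_1)
       = indicator (bisection_prod s r m U V) x"
proof -
  note Ud = compact_open_bisectionD[OF U] and Vd = compact_open_bisectionD[OF V]
  let ?Q' = "{q \<in> Q. fst q \<in> U \<and> snd q \<in> V}"
  have "(\<Sum>q\<in>Q. indicator U (fst q) * indicator V (snd q) :: 's)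
      = (\<Sum>q\<in>Q. if fst q \<in> U \<and> snd q \<in> V then 1 else 0)"
    by (intro sum.cong) (auto simp: indicator_def)
  also have "\<dots> = (\<Sum>q\<in>?Q'. 1)" by (rule sum.inter_filter[OF assms(3), symmetric])
  also have "\<dots> = indicator (bisection_prod s r m U V) x"
  proof (cases "x \<in> bisection_prod s r m U V")
    case True
    then obtain a b where ab: "a \<in> U" "b \<in> V" "s a = r b" "x = m a b"
      unfolding bisection_prod_iff by blast
    have "?Q' = {(a, b)}"
    proof
      show "{(a, b)} \<subseteq> ?Q'"
        using assms(5) ab Ud(5) Vd(5) by (auto simp: composable_pairs_def)
      show "?Q' \<subseteq> {(a, b)}"
      proof
        fix q assume q: "q \<in> ?Q'"
        obtain a' b' where q': "q = (a', b')" by fastforce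
        have a'b': "a' \<in> U" "b' \<in> V" "s a' = r b'" "m a' b' = x"
          using q q' assms(4) by (auto simp: composable_pairs_def)
        then have "a' = a \<and> b' = b"
          using bisection_prod_factors_eq[OF U V a'b'(1-3) ab(1-3)] ab(4) by simp
        then show "q \<in> {(a, b)}" using q' by simp
      qed
    qed
    then show ?thesis using True by simp
  next
    case False
    have "?Q' = {}"
    proof (rule ccontr)
      assume "?Q' \<noteq> {}"
      then obtain a b where "(a, b) \<in> ?Q'" by auto
      then have "x \<in> bisection_prod s r m U V"
        using assms(4) unfolding bisection_prod_iff composable_pairs_def by auto
      then show False using False by simp
    qed
    then have "(\<Sum>q\<in>?Q'. 1) = (0::'s)" by (simp only: sum.empty)
    moreover have "indicator (bisection_prod s r m U V) x = (0::'s)" using False by simp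
    ultimately show ?thesis by (rule trans[OF _ sym])
  qed
  finally show ?thesis .
qed

lemma finite_factorisations_Union:
  assumes "finite F" "\<forall>U\<in>F. compact_open_bisection T s r U"
    and "finite F'" "\<forall>V\<in>F'. compact_open_bisection T s r V"
  shows "finite {(a, b) \<in> composable_pairs T s r. m a b = x \<and> a \<in> \<Union>F \<and> b \<in> \<Union>F'}"
proof (rule finite_subset[OF _ finite_cartesian_product])
  show "{(a, b) \<in> composable_pairs T s r. m a b = x \<and> a \<in> \<Union>F \<and> b \<in> \<Union>F'}
      \<subseteq> {a \<in> \<Union>F. r a = r x} \<times> {b \<in> \<Union>F'. s b = s x}"
  proof
    fix q assume "q \<in> {(a, b) \<in> composable_pairs T s r. m a b = x \<and> a \<in> \<Union>F \<and> b \<in> \<Union>F'}"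
    then obtain a b where q: "q = (a, b)" "a \<in> G" "b \<in> G" "s a = r b" "m a b = x"
        "a \<in> \<Union>F" "b \<in> \<Union>F'"
      unfolding composable_pairs_def by blast
    then have "r x = r a" "s x = s b" using compD(2,3)[OF q(2-4)] by auto
    then show "q \<in> {a \<in> \<Union>F. r a = r x} \<times> {b \<in> \<Union>F'. s b = s x}" using q by simp
  qed
  show "finite {a \<in> \<Union>F. r a = r x}"
    using assms(1,2) compact_open_bisectionD(4) by (intro finite_fiber_Union) auto
  show "finite {b \<in> \<Union>F'. s b = s x}"
    using assms(3,4) compact_open_bisectionD(3) by (intro finite_fiber_Union) auto
qed

lemma convolution_sum_indicators:
  assumes F: "finite F" "\<forall>U\<in>F. compact_open_bisection T s r U"
    and F': "finite F'" "\<forall>V\<in>F'. compact_open_bisection T s r V"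
  shows "convolution T s r m (\<lambda>x. \<Sum>U\<in>F. (c U :: 's::comm_semiring_1) * indicator U x)
           (\<lambda>x. \<Sum>V\<in>F'. d V * indicator V x) x
       = (\<Sum>p\<in>F \<times> F'. (c (fst p) * d (snd p)) * indicator (bisection_prod s r m (fst p) (snd p)) x)"
proof -
  define t where "t = (\<lambda>x. \<Sum>U\<in>F. c U * indicator U x)"
  define f where "f = (\<lambda>x. \<Sum>V\<in>F'. d V * indicator V x)"
  let ?P = "{(a, b) \<in> composable_pairs T s r. m a b = x \<and> t a \<noteq> 0 \<and> f b \<noteq> 0}"
  let ?Q = "{(a, b) \<in> composable_pairs T s r. m a b = x \<and> a \<in> \<Union>F \<and> b \<in> \<Union>F'}"
  have finQ: "finite ?Q" by (rule finite_factorisations_Union[OF F F'])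
  have "?P \<subseteq> ?Q"
  proof
    fix q assume "q \<in> ?P"
    then obtain a b where q: "q = (a, b)" "(a, b) \<in> composable_pairs T s r" "m a b = x"
        "t a \<noteq> 0" "f b \<noteq> 0"
      by blast
    have "a \<in> \<Union>F" using q(4) unfolding t_def by (rule sum_indicator_nonzero_imp_mem_Union)
    moreover have "b \<in> \<Union>F'" using q(5) unfolding f_def by (rule sum_indicator_nonzero_imp_mem_Union)
    ultimately show "q \<in> ?Q" using q(1-3) by blast
  qed
  then have "convolution T s r m t f x = (\<Sum>(a, b)\<in>?Q. t a * f b)"
    unfolding convolution_def by (intro sum.mono_neutral_left[OF finQ]) auto
  also have "\<dots> = (\<Sum>q\<in>?Q. \<Sum>U\<in>F. \<Sum>V\<in>F'.
      (c U * d V) * (indicator U (fst q) * indicator V (snd q)))"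
  proof -
    have "t a * f b = (\<Sum>U\<in>F. \<Sum>V\<in>F'. (c U * d V) * (indicator U a * indicator V b))" for a b
      unfolding t_def f_def sum_product by (simp only: mult_ac)
    then show ?thesis by (simp only: split_def)
  qed
  also have "\<dots> = (\<Sum>U\<in>F. \<Sum>V\<in>F'.
      (c U * d V) * (\<Sum>q\<in>?Q. indicator U (fst q) * indicator V (snd q)))"
    by (simp only: sum_distrib_left sum.swap[of _ ?Q])
  also have "\<dots> = (\<Sum>U\<in>F. \<Sum>V\<in>F'. (c U * d V) * indicator (bisection_prod s r m U V) x)"
  proof (intro sum.cong refl arg_cong[where f = "\<lambda>y. _ * y"])
    fix U V assume "U \<in> F" "V \<in> F'"
    show "(\<Sum>q\<in>?Q. indicator U (fst q) * indicator V (snd q)) =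
        (indicator (bisection_prod s r m U V) x :: 's)"
    proof (rule count_factorisations_bisection_prod[OF _ _ finQ])
      show "compact_open_bisection T s r U" "compact_open_bisection T s r V"
        using \<open>U \<in> F\<close> \<open>V \<in> F'\<close> F(2) F'(2) by blast+
      show "?Q \<subseteq> {(a, b) \<in> composable_pairs T s r. m a b = x}" by blast
      show "{(a, b) \<in> composable_pairs T s r. m a b = x \<and> a \<in> U \<and> b \<in> V} \<subseteq> ?Q"
        using \<open>U \<in> F\<close> \<open>V \<in> F'\<close> by blast
    qed
  qed
  also have "\<dots> = (\<Sum>p\<in>F \<times> F'.
      (c (fst p) * d (snd p)) * indicator (bisection_prod s r m (fst p) (snd p)) x)"
    by (simp only: sum.cartesian_product split_def)
  finally show ?thesis unfolding t_def f_def .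
qed

lemma steinberg_algebra_convolution:
  assumes "t \<in> steinberg_algebra T s r TYPE('s::comm_semiring_1)"
    and "f \<in> steinberg_algebra T s r TYPE('s)"
  shows "convolution T s r m t f \<in> steinberg_algebra T s r TYPE('s)"
proof -
  obtain F c where F: "finite F" "\<forall>U\<in>F. compact_open_bisection T s r U"
      "t = (\<lambda>x. \<Sum>U\<in>F. (c U :: 's) * indicator U x)"
    using assms(1) unfolding steinberg_algebra_iff by blast
  obtain F' d where F': "finite F'" "\<forall>V\<in>F'. compact_open_bisection T s r V"
      "f = (\<lambda>x. \<Sum>V\<in>F'. (d V :: 's) * indicator V x)"
    using assms(2) unfolding steinberg_algebra_iff by blast
  have "convolution T s r m t f = (\<lambda>x. \<Sum>p\<in>F \<times> F'.
      (c (fst p) * d (snd p)) * indicator (bisection_prod s r m (fst p) (snd p)) x)"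
    unfolding F(3) F'(3) using convolution_sum_indicators[OF F(1,2) F'(1,2)] by (rule ext)
  also have "\<dots> \<in> steinberg_algebra T s r TYPE('s)"
    using F F' compact_open_bisection_prod by (intro steinberg_algebra_sumI) auto
  finally show ?thesis .
qed

lemma steinberg_compatible_map_inj_on:
  assumes simple: "congruence_simple (steinberg_algebra T s r TYPE('s::comm_semiring_1))
      (\<lambda>f g x. f x + g x) (convolution T s r m)"
    and compatible: "\<And>t f g. t \<in> steinberg_algebra T s r TYPE('s) \<Longrightarrow>
      f \<in> steinberg_algebra T s r TYPE('s) \<Longrightarrow> g \<in> steinberg_algebra T s r TYPE('s) \<Longrightarrow>
      \<phi> f = \<phi> g \<Longrightarrow> \<phi> (\<lambda>x. t x + f x) = \<phi> (\<lambda>x. t x + g x) \<and>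
        \<phi> (convolution T s r m t f) = \<phi> (convolution T s r m t g) \<and>
        \<phi> (convolution T s r m f t) = \<phi> (convolution T s r m g t)"
    and "f \<in> steinberg_algebra T s r TYPE('s)" "g \<in> steinberg_algebra T s r TYPE('s)" "\<phi> f \<noteq> \<phi> g"
  shows "inj_on \<phi> (steinberg_algebra T s r TYPE('s))"
proof -
  have "(\<forall>f\<in>steinberg_algebra T s r TYPE('s). \<forall>g\<in>steinberg_algebra T s r TYPE('s). \<phi> f = \<phi> g)
    \<or> inj_on \<phi> (steinberg_algebra T s r TYPE('s))"
  proof (rule congruence_simple_compatible_map[OF simple])
    fix f g assume "f \<in> steinberg_algebra T s r TYPE('s)" "g \<in> steinberg_algebra T s r TYPE('s)"
    then show "(\<lambda>x. f x + g x) \<in> steinberg_algebra T s r TYPE('s) \<and>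
        convolution T s r m f g \<in> steinberg_algebra T s r TYPE('s)"
      by (simp add: steinberg_algebra_add steinberg_algebra_convolution)
  qed (rule compatible)
  then show ?thesis using assms(3-5) by blast
qed

lemma arrow_sum_add:
  assumes "t \<in> steinberg_algebra T s r TYPE('s::comm_semiring_1)"
    and "f \<in> steinberg_algebra T s r TYPE('s)"
  shows "arrow_sum s r G (\<lambda>x. t x + f x) u v = arrow_sum s r G t u v + arrow_sum s r G f u v"
proof -
  let ?S = "{x \<in> G. r x = u \<and> s x = v \<and> (t x \<noteq> 0 \<or> f x \<noteq> 0)}"
  have "?S \<subseteq> {x \<in> G. r x = u \<and> t x \<noteq> 0} \<union> {x \<in> G. r x = u \<and> f x \<noteq> 0}" by auto
  then have fin: "finite ?S"
    using steinberg_algebra_fibers_finite(1)[OF assms(1)] steinberg_algebra_fibers_finite(1)[OF assms(2)]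
    by (meson finite_Un finite_subset)
  have "arrow_sum s r G (\<lambda>x. t x + f x) u v = sum (\<lambda>x. t x + f x) ?S"
    by (rule arrow_sum_eq_sum[OF fin]) auto
  also have "\<dots> = sum t ?S + sum f ?S" by (rule sum.distrib)
  also have "sum t ?S = arrow_sum s r G t u v" by (rule arrow_sum_eq_sum[OF fin, symmetric]) auto
  also have "sum f ?S = arrow_sum s r G f u v" by (rule arrow_sum_eq_sum[OF fin, symmetric]) auto
  finally show ?thesis .
qed

lemma arrow_sum_convolution_eq_sum_pairs:
  assumes tA: "t \<in> steinberg_algebra T s r TYPE('s::comm_semiring_1)"
    and fA: "f \<in> steinberg_algebra T s r TYPE('s)"
  shows "arrow_sum s r G (convolution T s r m t f) u w =
    (\<Sum>p\<in>{(a, b) \<in> composable_pairs T s r. r a = u \<and> s b = w \<and> t a \<noteq> 0 \<and> f b \<noteq> 0}.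
      t (fst p) * f (snd p))"
  (is "_ = (\<Sum>p\<in>?Q. _)")
proof -
  let ?mult = "\<lambda>(a, b). m a b"
  have "?Q \<subseteq> {a \<in> G. r a = u \<and> t a \<noteq> 0} \<times> {b \<in> G. s b = w \<and> f b \<noteq> 0}"
    unfolding composable_pairs_def by auto
  then have finQ: "finite ?Q"
    using steinberg_algebra_fibers_finite(1)[OF tA] steinberg_algebra_fibers_finite(2)[OF fA]
    by (meson finite_SigmaI finite_subset)
  have factorisations: "{(a, b) \<in> composable_pairs T s r. m a b = g \<and> t a \<noteq> 0 \<and> f b \<noteq> 0}
      = {p \<in> ?Q. ?mult p = g}" if g: "g \<in> G" "r g = u" "s g = w" for g
  proof (intro set_eqI iffI)
    fix p assume "p \<in> {(a, b) \<in> composable_pairs T s r. m a b = g \<and> t a \<noteq> 0 \<and> f b \<noteq> 0}"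
    then obtain a b where p: "p = (a, b)" "(a, b) \<in> composable_pairs T s r" "m a b = g"
        "t a \<noteq> 0" "f b \<noteq> 0"
      by blast
    then have "a \<in> G" "b \<in> G" "s a = r b" unfolding composable_pairs_def by auto
    then have "r a = u" "s b = w" using compD p g by auto
    then show "p \<in> {p \<in> ?Q. ?mult p = g}" using p by auto
  qed auto
  have mult_Q: "?mult ` ?Q \<subseteq> {x \<in> G. r x = u \<and> s x = w}"
    using compD unfolding composable_pairs_def by auto
  have support: "{x \<in> G. r x = u \<and> s x = w \<and> convolution T s r m t f x \<noteq> 0} \<subseteq> ?mult ` ?Q"
  proof
    fix g assume g: "g \<in> {x \<in> G. r x = u \<and> s x = w \<and> convolution T s r m t f x \<noteq> 0}"
    then have "{(a, b) \<in> composable_pairs T s r. m a b = g \<and> t a \<noteq> 0 \<and> f b \<noteq> 0} \<noteq> {}"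
      unfolding convolution_def by force
    then obtain p where "p \<in> {p \<in> ?Q. ?mult p = g}" using factorisations g by blast
    then show "g \<in> ?mult ` ?Q" by force
  qed
  have "arrow_sum s r G (convolution T s r m t f) u w = sum (convolution T s r m t f) (?mult ` ?Q)"
    by (rule arrow_sum_eq_sum[OF finite_imageI[OF finQ] support mult_Q])
  also have "\<dots> = (\<Sum>g\<in>?mult ` ?Q. \<Sum>p\<in>{p \<in> ?Q. ?mult p = g}. t (fst p) * f (snd p))"
  proof (rule sum.cong[OF refl])
    fix g assume "g \<in> ?mult ` ?Q"
    then have g: "g \<in> G" "r g = u" "s g = w" using mult_Q by auto
    show "convolution T s r m t f g = (\<Sum>p\<in>{p \<in> ?Q. ?mult p = g}. t (fst p) * f (snd p))"
      unfolding convolution_def factorisations[OF g] by (simp add: case_prod_beta)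
  qed
  also have "\<dots> = (\<Sum>p\<in>?Q. t (fst p) * f (snd p))"
    by (rule sum.image_gen[OF finQ, symmetric])
  finally show ?thesis .
qed

lemma arrow_sum_product_eq_sum_pairs:
  assumes tA: "t \<in> steinberg_algebra T s r TYPE('s::comm_semiring_1)"
    and fA: "f \<in> steinberg_algebra T s r TYPE('s)"
  shows "(\<Sum>v\<in>{v. arrow_sum s r G t u v \<noteq> 0}. arrow_sum s r G t u v * arrow_sum s r G f v w) =
    (\<Sum>p\<in>{(a, b) \<in> composable_pairs T s r. r a = u \<and> s b = w \<and> t a \<noteq> 0 \<and> f b \<noteq> 0}.
      t (fst p) * f (snd p))"
  (is "_ = (\<Sum>p\<in>?Q. _)")
proof -
  let ?Pa = "{a \<in> G. r a = u \<and> t a \<noteq> 0}"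
  let ?Pb = "\<lambda>v. {b \<in> G. r b = v \<and> s b = w \<and> f b \<noteq> 0}"
  have finPa: "finite ?Pa" using steinberg_algebra_fibers_finite(1)[OF tA] .
  have finPb: "finite (?Pb v)" for v
    by (rule finite_subset[OF _ steinberg_algebra_fibers_finite(2)[OF fA, of w]]) auto
  have t_sum: "arrow_sum s r G t u v = (\<Sum>a\<in>{a \<in> ?Pa. s a = v}. t a)" for v
    unfolding arrow_sum_def by (rule sum.cong) auto
  have f_sum: "arrow_sum s r G f v w = sum f (?Pb v)" for v
    unfolding arrow_sum_def by (rule sum.cong) auto
  have "{v. arrow_sum s r G t u v \<noteq> 0} \<subseteq> s ` ?Pa"
  proof
    fix v assume v: "v \<in> {v. arrow_sum s r G t u v \<noteq> 0}"
    show "v \<in> s ` ?Pa"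
    proof (rule ccontr)
      assume "v \<notin> s ` ?Pa"
      then have "{a \<in> ?Pa. s a = v} = {}" by blast
      then have "arrow_sum s r G t u v = 0" by (simp only: t_sum sum.empty)
      with v show False by simp
    qed
  qed
  then have "(\<Sum>v\<in>{v. arrow_sum s r G t u v \<noteq> 0}. arrow_sum s r G t u v * arrow_sum s r G f v w)
      = (\<Sum>v\<in>s ` ?Pa. arrow_sum s r G t u v * arrow_sum s r G f v w)"
    by (rule sum.mono_neutral_left[OF finite_imageI[OF finPa]]) auto
  also have "\<dots> = (\<Sum>v\<in>s ` ?Pa. \<Sum>a\<in>{a. a \<in> ?Pa \<and> s a = v}. t a * arrow_sum s r G f (s a) w)"
    unfolding t_sum by (intro sum.cong refl) (auto simp: sum_distrib_right)
  also have "\<dots> = (\<Sum>a\<in>?Pa. t a * arrow_sum s r G f (s a) w)"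
    by (rule sum.image_gen[OF finPa, symmetric])
  also have "\<dots> = (\<Sum>a\<in>?Pa. \<Sum>b\<in>?Pb (s a). t a * f b)"
    unfolding f_sum by (simp add: sum_distrib_left)
  also have "\<dots> = (\<Sum>p\<in>Sigma ?Pa (\<lambda>a. ?Pb (s a)). t (fst p) * f (snd p))"
    by (subst sum.Sigma[OF finPa]) (simp_all add: finPb split_def)
  also have "Sigma ?Pa (\<lambda>a. ?Pb (s a)) = ?Q"
    unfolding composable_pairs_def by auto
  finally show ?thesis .
qed

lemma arrow_sum_convolution:
  assumes "t \<in> steinberg_algebra T s r TYPE('s::comm_semiring_1)"
    and "f \<in> steinberg_algebra T s r TYPE('s)"
  shows "arrow_sum s r G (convolution T s r m t f) u w =
    (\<Sum>v\<in>{v. arrow_sum s r G t u v \<noteq> 0}. arrow_sum s r G t u v * arrow_sum s r G f v w)"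
  unfolding arrow_sum_convolution_eq_sum_pairs[OF assms] arrow_sum_product_eq_sum_pairs[OF assms] ..

lemma arrow_sum_indicator_bisection:
  assumes B: "compact_open_bisection T s r B" and "\<gamma> \<in> B"
  shows "arrow_sum s r G (indicator B) (r \<gamma>) (s \<gamma>) = (1::'s::comm_semiring_1)"
proof -
  note Bd = compact_open_bisectionD[OF B]
  have "{x \<in> G. r x = r \<gamma> \<and> s x = s \<gamma> \<and> indicator B x \<noteq> (0::'s)} = {\<gamma>}"
  proof (intro set_eqI iffI)
    fix x assume "x \<in> {x \<in> G. r x = r \<gamma> \<and> s x = s \<gamma> \<and> indicator B x \<noteq> (0::'s)}"
    then have "x \<in> B" "r x = r \<gamma>" by (auto split: split_indicator_asm)
    then show "x \<in> {\<gamma>}" using inj_onD[OF Bd(4)] \<open>\<gamma> \<in> B\<close> by blast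
  qed (use \<open>\<gamma> \<in> B\<close> Bd(5) in auto)
  then show ?thesis unfolding arrow_sum_def using \<open>\<gamma> \<in> B\<close> by simp
qed

text \<open>On a bisection of isotropy arrows, each \<open>b\<close> and the unit \<open>s b\<close> lie over the same
  pair of units.\<close>

lemma arrow_sum_indicator_isotropy_bisection:
  assumes B: "compact_open_bisection T s r B" and iso: "B \<subseteq> isotropy T s r"
  shows "arrow_sum s r G (indicator B) u v = (arrow_sum s r G (indicator (s ` B)) u v :: 's::comm_semiring_1)"
proof -
  note Bd = compact_open_bisectionD[OF B]
  let ?SB = "{x \<in> G. r x = u \<and> s x = v \<and> indicator B x \<noteq> (0::'s)}"
  have sr: "s b = r b" if "b \<in> B" for b using iso that unfolding isotropy_def by blast
  have image: "{x \<in> G. r x = u \<and> s x = v \<and> indicator (s ` B) x \<noteq> (0::'s)} = s ` ?SB"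
  proof (intro set_eqI iffI)
    fix x assume "x \<in> {x \<in> G. r x = u \<and> s x = v \<and> indicator (s ` B) x \<noteq> (0::'s)}"
    then obtain b where x: "r x = u" "s x = v" "b \<in> B" "x = s b" by (auto split: split_indicator_asm)
    then have "b \<in> G" "s b = u" "s b = v" using Bd(5) arrowD(4,5) by auto
    then show "x \<in> s ` ?SB" using x sr by auto
  next
    fix x assume "x \<in> s ` ?SB"
    then obtain b where b: "b \<in> G" "r b = u" "s b = v" "b \<in> B" "x = s b"
      by (auto split: split_indicator_asm)
    moreover have "x \<in> s ` B" using b by blast
    ultimately show "x \<in> {x \<in> G. r x = u \<and> s x = v \<and> indicator (s ` B) x \<noteq> (0::'s)}"
      using arrowD[OF b(1)] sr[OF b(4)] by auto
  qed
  have "inj_on s ?SB" using Bd(3) by (rule inj_on_subset) (auto simp: indicator_eq_0_iff)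
  have "arrow_sum s r G (indicator (s ` B)) u v = (\<Sum>x\<in>s ` ?SB. indicator (s ` B) x :: 's)"
    by (simp only: arrow_sum_def image)
  also have "\<dots> = (\<Sum>b\<in>?SB. indicator (s ` B) (s b))"
    by (rule sum.reindex[OF \<open>inj_on s ?SB\<close>, unfolded o_def])
  also have "\<dots> = (\<Sum>b\<in>?SB. indicator B b)"
    by (rule sum.cong) (auto simp: indicator_eq_0_iff)
  also have "\<dots> = arrow_sum s r G (indicator B) u v" by (simp only: arrow_sum_def)
  finally show ?thesis ..
qed

end

section \<open>Congruence-simple Steinberg algebras\<close>

context ample
begin

lemma steinberg_simple_imp_field_or_boolean:
  assumes "G \<noteq> {}" and semifield: "semifield_ax TYPE('s::comm_semiring_1)"
    and simple: "congruence_simple (steinberg_algebra T s r TYPE('s)) (\<lambda>f g x. f x + g x)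
      (convolution T s r m)"
  shows "is_field_sf TYPE('s) \<or> is_boolean_sf TYPE('s)"
proof (cases "\<forall>x::'s. \<exists>y. x + y = 0")
  case True
  then show ?thesis using semifield unfolding is_field_sf_def by blast
next
  case False
  note zero_sum_free = semifield_zero_sum_free[OF semifield False]
    and no_zero_divisors = semifield_no_zero_divisors[OF semifield]
  let ?zeros = "\<lambda>(f :: 'g \<Rightarrow> 's) x. f x = 0"
  have compatible: "?zeros (\<lambda>x. t x + f x) = ?zeros (\<lambda>x. t x + g x) \<and>
      ?zeros (convolution T s r m t f) = ?zeros (convolution T s r m t g) \<and>
      ?zeros (convolution T s r m f t) = ?zeros (convolution T s r m g t)"
    if "?zeros f = ?zeros g" for t f g :: "'g \<Rightarrow> 's"
  proof -
    have fg: "f x = 0 \<longleftrightarrow> g x = 0" for x using that by metis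
    have "convolution T s r m t f x = 0 \<longleftrightarrow> convolution T s r m t g x = 0"
      "convolution T s r m f t x = 0 \<longleftrightarrow> convolution T s r m g t x = 0" for x
      by (rule convolution_zero_cong[OF zero_sum_free no_zero_divisors]; simp add: fg)+
    then show ?thesis by (simp add: fun_eq_iff zero_sum_free fg)
  qed
  obtain g where "g \<in> G" using assms(1) by blast
  then obtain W where W: "compact_open_bisection T s r W" "g \<in> W"
    by (rule compact_open_bisection_exists)
  let ?c_W = "\<lambda>c x. (c :: 's) * indicator W x"
  have in_A: "?c_W c \<in> steinberg_algebra T s r TYPE('s)" for c
    by (rule indicator_in_steinberg_algebra[OF W(1)])
  have "?zeros (?c_W 0) \<noteq> ?zeros (?c_W 1)"
    using W(2) by (metis mult_1 mult_zero_left indicator_simps(1) one_neq_zero)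
  then have inj: "inj_on ?zeros (steinberg_algebra T s r TYPE('s))"
    by (intro steinberg_compatible_map_inj_on[OF simple _ in_A[of 0] in_A[of 1]]) (erule compatible)
  have "c = 1" if "c \<noteq> 0" for c :: 's
  proof -
    have "?zeros (?c_W c) = ?zeros (?c_W 1)" using that by (simp add: no_zero_divisors)
    then have "?c_W c = ?c_W 1" using inj_onD[OF inj _ in_A in_A] by blast
    then show ?thesis using W(2) by (metis indicator_simps(1) mult.right_neutral)
  qed
  then show ?thesis using is_boolean_sfI zero_sum_free by blast
qed

lemma convolution_eq_outside_invariant:
  assumes invariant: "invariant_set T s r D"
    and agree: "\<And>y. y \<notin> {y \<in> G. s y \<in> D} \<Longrightarrow> f y = g y"
    and x: "x \<notin> {y \<in> G. s y \<in> D}"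
  shows "convolution T s r m t f x = convolution T s r m t g x"
    "convolution T s r m f t x = convolution T s r m g t x"
proof -
  have "a \<notin> {y \<in> G. s y \<in> D} \<and> b \<notin> {y \<in> G. s y \<in> D}"
    if "(a, b) \<in> composable_pairs T s r" "m a b = x" for a b
  proof -
    have ab: "a \<in> G" "b \<in> G" "s a = r b" using that(1) unfolding composable_pairs_def by auto
    then have "s b \<notin> D" using x that(2) compD[OF ab] by auto
    then show ?thesis using invariant_set_source_iff_range[OF invariant ab(2)] ab(3) by auto
  qed
  then show "convolution T s r m t f x = convolution T s r m t g x"
    "convolution T s r m f t x = convolution T s r m g t x"
    using agree by (auto intro!: convolution_cong_left convolution_cong_right)
qed

text \<open>For a nontrivial open invariant \<open>D\<close>, forgetting the values on arrows with source
  in \<open>D\<close> is compatible with the algebra operations, yet neither constant nor injective.\<close>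

lemma steinberg_simple_imp_minimal:
  assumes simple: "congruence_simple (steinberg_algebra T s r TYPE('s::comm_semiring_1))
      (\<lambda>f g x. f x + g x) (convolution T s r m)"
  shows "minimal_groupoid T s r"
  unfolding minimal_groupoid_def
proof (intro allI impI)
  fix D assume D: "openin X D \<and> invariant_set T s r D"
  then have D_units: "D \<subseteq> U0" and invariant: "invariant_set T s r D"
    unfolding invariant_set_def by auto
  let ?E = "{x \<in> G. s x \<in> D}"
  let ?forget = "\<lambda>(f :: 'g \<Rightarrow> 's) x. if x \<in> ?E then 0 else f x"
  have compatible: "?forget (\<lambda>x. t x + f x) = ?forget (\<lambda>x. t x + g x) \<and>
      ?forget (convolution T s r m t f) = ?forget (convolution T s r m t g) \<and>
      ?forget (convolution T s r m f t) = ?forget (convolution T s r m g t)"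
    if fg: "?forget f = ?forget g" for t f g :: "'g \<Rightarrow> 's"
  proof -
    have agree: "f x = g x" if "x \<notin> ?E" for x using fg that by (metis (lifting))
    show ?thesis using agree convolution_eq_outside_invariant[OF invariant agree] by auto
  qed
  show "D = {} \<or> D = U0"
  proof (rule ccontr)
    assume "\<not> (D = {} \<or> D = U0)"
    then obtain u v where u: "u \<in> U0" "u \<notin> D" and v: "v \<in> D" using D_units by blast
    obtain W where W: "compact_open_bisection T s r W" "u \<in> W"
      using compact_open_bisection_exists unitD(1)[OF u(1)] by blast
    have "?forget (\<lambda>x. 0 * indicator W x) u \<noteq> ?forget (\<lambda>x. 1 * indicator W x) u"
      using u W(2) unitD[OF u(1)] by simp
    then have "?forget (\<lambda>x. 0 * indicator W x) \<noteq> ?forget (\<lambda>x. 1 * indicator W x)"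
      unfolding fun_eq_iff by blast
    then have inj: "inj_on ?forget (steinberg_algebra T s r TYPE('s))"
      by (intro steinberg_compatible_map_inj_on[OF simple _
            indicator_in_steinberg_algebra[OF W(1), where c = 0]
            indicator_in_steinberg_algebra[OF W(1), where c = 1]]) (erule compatible)
    have "v \<in> G" "s v = v" using unitD v D_units by auto
    then obtain W' where W': "compact_open_bisection T s r W'" "v \<in> W'" "W' \<subseteq> G" "s ` W' \<subseteq> D"
      using compact_open_bisection_basis[OF _ openin_topspace] D v by metis
    have "?forget (\<lambda>x. 0 * indicator W' x) = ?forget (\<lambda>x. 1 * indicator W' x)"
      using W'(3,4) by (auto simp: fun_eq_iff indicator_def)
    then have "(\<lambda>x. 0 * indicator W' x :: 's) = (\<lambda>x. 1 * indicator W' x)"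
      using inj_onD[OF inj _ indicator_in_steinberg_algebra indicator_in_steinberg_algebra] W'(1)
      by blast
    then show False using W'(2) by (metis mult_1 mult_zero_left indicator_simps(1) one_neq_zero)
  qed
qed

lemma arrow_sum_compatible:
  assumes A: "t \<in> steinberg_algebra T s r TYPE('s::comm_semiring_1)"
    "f \<in> steinberg_algebra T s r TYPE('s)" "g \<in> steinberg_algebra T s r TYPE('s)"
    and fg: "arrow_sum s r G f = arrow_sum s r G g"
  shows "arrow_sum s r G (\<lambda>x. t x + f x) = arrow_sum s r G (\<lambda>x. t x + g x) \<and>
    arrow_sum s r G (convolution T s r m t f) = arrow_sum s r G (convolution T s r m t g) \<and>
    arrow_sum s r G (convolution T s r m f t) = arrow_sum s r G (convolution T s r m g t)"
  unfolding fun_eq_iff arrow_sum_add[OF A(1,2)] arrow_sum_add[OF A(1,3)]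
    arrow_sum_convolution[OF A(1,2)] arrow_sum_convolution[OF A(1,3)]
    arrow_sum_convolution[OF A(2,1)] arrow_sum_convolution[OF A(3,1)] fg by simp

text \<open>The compatible map \<open>arrow_sum\<close> identifies \<open>1\<^sub>B\<close> with \<open>1\<^bsub>s B\<^esub>\<close> but is not
  constant, so \<open>1\<^sub>B = 1\<^bsub>s B\<^esub>\<close>.\<close>

lemma steinberg_simple_isotropy_bisection_subset_units:
  assumes simple: "congruence_simple (steinberg_algebra T s r TYPE('s::comm_semiring_1))
      (\<lambda>f g x. f x + g x) (convolution T s r m)"
    and B: "compact_open_bisection T s r B" and iso: "B \<subseteq> isotropy T s r"
  shows "B \<subseteq> U0"
proof
  fix \<gamma> assume "\<gamma> \<in> B"
  let ?\<mu> = "arrow_sum s r G :: ('g \<Rightarrow> 's) \<Rightarrow> 'g \<Rightarrow> 'g \<Rightarrow> 's"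
  let ?B = "\<lambda>x. 1 * indicator B x :: 's" and ?sB = "\<lambda>x. 1 * indicator (s ` B) x :: 's"
  have B_in: "(\<lambda>x. c * indicator B x) \<in> steinberg_algebra T s r TYPE('s)" for c
    by (rule indicator_in_steinberg_algebra[OF B])
  have sB_in: "?sB \<in> steinberg_algebra T s r TYPE('s)"
    by (rule indicator_in_steinberg_algebra[OF compact_open_bisection_source_image[OF B]])
  have "?\<mu> (\<lambda>x. 0 * indicator B x) \<noteq> ?\<mu> ?B"
  proof
    assume "?\<mu> (\<lambda>x. 0 * indicator B x) = ?\<mu> ?B"
    then have "?\<mu> (\<lambda>x. 0 * indicator B x) (r \<gamma>) (s \<gamma>) = ?\<mu> ?B (r \<gamma>) (s \<gamma>)" by simp
    moreover have "?\<mu> (\<lambda>x. 0 * indicator B x) (r \<gamma>) (s \<gamma>) = 0" unfolding arrow_sum_def by simp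
    moreover have "?\<mu> ?B (r \<gamma>) (s \<gamma>) = 1"
      using arrow_sum_indicator_bisection[OF B \<open>\<gamma> \<in> B\<close>] by simp
    ultimately show False by simp
  qed
  then have inj: "inj_on ?\<mu> (steinberg_algebra T s r TYPE('s))"
    by (intro steinberg_compatible_map_inj_on[OF simple _ B_in[of 0] B_in[of 1]])
      (rule arrow_sum_compatible)
  have "?\<mu> (indicator B) = ?\<mu> (indicator (s ` B))"
    by (intro ext arrow_sum_indicator_isotropy_bisection[OF B iso])
  then have "?\<mu> ?B = ?\<mu> ?sB" by simp
  then have "?B = ?sB" by (rule inj_onD[OF inj _ B_in sB_in])
  then have "?B \<gamma> = ?sB \<gamma>" by (rule fun_cong)
  then have "\<gamma> \<in> s ` B" using \<open>\<gamma> \<in> B\<close> by (simp add: indicator_eq_1_iff)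
  then show "\<gamma> \<in> U0" using compact_open_bisectionD(5)[OF B] unfolding unit_space_def by blast
qed

lemma steinberg_simple_imp_effective:
  assumes simple: "congruence_simple (steinberg_algebra T s r TYPE('s::comm_semiring_1))
      (\<lambda>f g x. f x + g x) (convolution T s r m)"
  shows "effective_groupoid T s r"
  unfolding effective_groupoid_def
proof
  have "U0 \<subseteq> isotropy T s r" unfolding isotropy_def using unitD by auto
  then show "U0 \<subseteq> T interior_of isotropy T s r"
    by (rule interior_of_maximal[OF _ openin_unit_space])
  show "T interior_of isotropy T s r \<subseteq> U0"
  proof
    fix \<gamma> assume \<gamma>: "\<gamma> \<in> T interior_of isotropy T s r"
    then have \<gamma>G: "\<gamma> \<in> G" using interior_of_subset_topspace[of T "isotropy T s r"] by blast
    then have "s \<gamma> \<in> U0" unfolding unit_space_def by blast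
    then have "s \<gamma> \<in> topspace X" by (simp only: topspace_unit_space)
    then obtain B where B: "compact_open_bisection T s r B" "\<gamma> \<in> B"
        "B \<subseteq> T interior_of isotropy T s r" "s ` B \<subseteq> topspace X"
      by (rule compact_open_bisection_basis[OF \<gamma>G openin_interior_of \<gamma> openin_topspace])
    have "B \<subseteq> isotropy T s r"
      using B(3) interior_of_subset[of T "isotropy T s r"] by (rule order_trans)
    then show "\<gamma> \<in> U0"
      using steinberg_simple_isotropy_bisection_subset_units[OF simple B(1)] B(2) by blast
  qed
qed

end

theorem proposition3p2:
  fixes T :: "'g topology" and s r :: "'g \<Rightarrow> 'g" and m :: "'g \<Rightarrow> 'g \<Rightarrow> 'g" and i :: "'g \<Rightarrow> 'g"
  assumes "ample_groupoid T s r m i"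
    and "topspace T \<noteq> {}"
    and "semifield_ax TYPE('s::comm_semiring_1)"
    and "congruence_simple (steinberg_algebra T s r TYPE('s)) (\<lambda>f g x. f x + g x)
           (convolution T s r m)"
  shows "(is_field_sf TYPE('s) \<or> is_boolean_sf TYPE('s))
         \<and> minimal_groupoid T s r \<and> effective_groupoid T s r"
proof -
  interpret ample T s r m i by (rule ample.intro) (rule assms(1))
  show ?thesis
    using steinberg_simple_imp_field_or_boolean[OF assms(2-4)]
      steinberg_simple_imp_minimal[OF assms(4)] steinberg_simple_imp_effective[OF assms(4)]
    by blast
qed

end
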